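(* Let $k\ge9$ and let $\boldsymbol\xi\in[P_{k-1}(\boldsymbol K)]^3$ be such that all the vertex functionals, the edge moments $(\boldsymbol\xi\cdot\boldsymbol t,1)_{\boldsymbol e}$, and the edge functionals (1.a)–(1.f) of the space $\mathbf N^{\operatorname{curl}}_{k-1}$ (listed in the context) vanish on $\boldsymbol\xi$. Then $\boldsymbol\xi$, $\nabla\boldsymbol\xi$ and $\nabla(\operatorname{curl}\boldsymbol\xi)$ vanish on every edge of $\boldsymbol K$.
   Context: $\boldsymbol K$ is a tetrahedron, $P_m$ denotes polynomials of degree $\le m$. For an edge $\boldsymbol e$ with endpoints having barycentric coordinates $\lambda_0,\lambda_1$ (restricted to $\boldsymbol e$), let $\boldsymbol t$ be its unit tangent and $\boldsymbol n_1,\boldsymbol n_2$ orthonormal unit normals with $\boldsymbol n_1\perp\boldsymbol n_2$. For a space $W$ of functions on $\boldsymbol e$, $W/\mathbb R$ denotes its subspace of zero-mean functions. $\langle\!\langle u,v\rangle\!\rangle_{0,\boldsymbol e}=(\partial u/\partial\boldsymbol t,\partial v/\partial\boldsymbol t)_{\boldsymbol e}$. Functionals of $\mathbf N^{\operatorname{curl}}_{k-1}$ on $\boldsymbol\xi\in[P_{k-1}(\boldsymbol K)]^3$: vertex functionals: all partial derivatives $D^\alpha\boldsymbol\xi(\boldsymbol x)$, $0\le|\alpha|\le3$, at each vertex $\boldsymbol x$; edge moments $(\boldsymbol\xi\cdot\boldsymbol t,1)_{\boldsymbol e}$ for each edge; on each edge $\boldsymbol e$: (1.a) $(\boldsymbol\xi\cdot\boldsymbol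 t,b)_{\boldsymbol e}$, $b\in(\lambda_0\lambda_1)^4P_{k-9}(\boldsymbol e)/\mathbb R$; (1.b) $\langle\!\langle\boldsymbol\xi\cdot\boldsymbol n_j,b\rangle\!\rangle_{0,\boldsymbol e}$, $b\in(\lambda_0\lambda_1)^4P_{k-9}(\boldsymbol e)$, $j=1,2$; (1.c) $(\partial(\boldsymbol\xi\cdot\boldsymbol t)/\partial\boldsymbol n_j,b)_{\boldsymbol e}$, $b\in(\lambda_0\lambda_1)^3P_{k-8}(\boldsymbol e)$, $j=1,2$; (1.d) $(\partial(\boldsymbol\xi\cdot\boldsymbol n_{j'})/\partial\boldsymbol n_j,b)_{\boldsymbol e}$, $b\in(\lambda_0\lambda_1)^3P_{k-8}(\boldsymbol e)$, $j,j'=1,2$; (1.e) $(\partial(\operatorname{curl}\boldsymbol\xi)/\partial\boldsymbol n_1,\boldsymbol b)_{\boldsymbol e}$, $\boldsymbol b\in[(\lambda_0\lambda_1)^2P_{k-7}(\boldsymbol e)]^3$; (1.f) $((I-\boldsymbol n_2\otimes\boldsymbol n_2)\,\partial(\operatorname{curl}\boldsymbol\xi)/\partial\boldsymbol n_2,\boldsymbol b)_{\boldsymbol e}$, $\boldsymbol b\in[(\lambda_0\lambda_1)^2P_{k-7}(\boldsymbol e)]^3$. *)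

theory Defs
  imports "HOL-Analysis.Analysis" "HOL-Computational_Algebra.Polynomial"
begin

definition poly3 :: "nat \<Rightarrow> (real^3 \<Rightarrow> real) \<Rightarrow> bool" where
  "poly3 m f \<longleftrightarrow> (\<exists>c :: nat \<Rightarrow> nat \<Rightarrow> nat \<Rightarrow> real. \<forall>x.
     f x = (\<Sum>a\<le>m. \<Sum>b\<le>m - a. \<Sum>d\<le>m - a - b.
              c a b d * (x$1)^a * (x$2)^b * (x$3)^d))"

definition vpoly3 :: "nat \<Rightarrow> (real^3 \<Rightarrow> real^3) \<Rightarrow> bool" where
  "vpoly3 m f \<longleftrightarrow> (\<forall>i. poly3 m (\<lambda>x. f x $ i))"

definition dd :: "(real^3 \<Rightarrow> 'b::real_normed_vector) \<Rightarrow> real^3 \<Rightarrow> real^3 \<Rightarrow> 'b" where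
  "dd f v x = frechet_derivative f (at x) v"

definition pd :: "3 \<Rightarrow> (real^3 \<Rightarrow> 'b::real_normed_vector) \<Rightarrow> real^3 \<Rightarrow> 'b" where
  "pd i f = dd f (axis i 1)"

definition curl :: "(real^3 \<Rightarrow> real^3) \<Rightarrow> real^3 \<Rightarrow> real^3" where
  "curl f x = vector
     [pd 2 (\<lambda>y. f y $ 3) x - pd 3 (\<lambda>y. f y $ 2) x,
      pd 3 (\<lambda>y. f y $ 1) x - pd 1 (\<lambda>y. f y $ 3) x,
      pd 1 (\<lambda>y. f y $ 2) x - pd 2 (\<lambda>y. f y $ 1) x]"

text \<open>Edge from a to b parametrised by s \<in> [0,1]; barycentrics on the edge are
  lambda0 = 1 - s, lambda1 = s.  Functions on the edge are functions of s.\<close>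
definition edge_pt :: "real^3 \<Rightarrow> real^3 \<Rightarrow> real \<Rightarrow> real^3" where
  "edge_pt a b s = a + s *\<^sub>R (b - a)"

definition edge_ip :: "real^3 \<Rightarrow> real^3 \<Rightarrow> (real \<Rightarrow> real) \<Rightarrow> (real \<Rightarrow> real) \<Rightarrow> real" where
  "edge_ip a b u w = norm (b - a) * integral {0..1} (\<lambda>s. u s * w s)"

definition edge_ipv :: "real^3 \<Rightarrow> real^3 \<Rightarrow> (real \<Rightarrow> real^3) \<Rightarrow> (real \<Rightarrow> real^3) \<Rightarrow> real" where
  "edge_ipv a b u w = norm (b - a) * integral {0..1} (\<lambda>s. u s \<bullet> w s)"

definition bubble_space :: "nat \<Rightarrow> nat \<Rightarrow> (real \<Rightarrow> real) set" where
  "bubble_space m d = {(\<lambda>s. ((1 - s) * s) ^ m * poly q s) | q :: real poly. degree q \<le> d}"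

definition zero_mean :: "(real \<Rightarrow> real) set \<Rightarrow> (real \<Rightarrow> real) set" where
  "zero_mean W = {w \<in> W. integral {0..1} w = 0}"

definition tderiv :: "real^3 \<Rightarrow> real^3 \<Rightarrow> (real \<Rightarrow> real) \<Rightarrow> real \<Rightarrow> real" where
  "tderiv a b w s = deriv w s / norm (b - a)"

definition utangent :: "real^3 \<Rightarrow> real^3 \<Rightarrow> real^3" where
  "utangent a b = (1 / norm (b - a)) *\<^sub>R (b - a)"

definition edge_dofs_vanish ::
  "nat \<Rightarrow> real^3 \<Rightarrow> real^3 \<Rightarrow> real^3 \<Rightarrow> real^3 \<Rightarrow> (real^3 \<Rightarrow> real^3) \<Rightarrow> bool" where
  "edge_dofs_vanish k a b n1 n2 \<xi> \<longleftrightarrow>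
     (let t = utangent a b; p = edge_pt a b; n = (\<lambda>j::nat. if j = 1 then n1 else n2) in
       edge_ip a b (\<lambda>s. \<xi> (p s) \<bullet> t) (\<lambda>s. 1) = 0
     \<and> (\<forall>w \<in> zero_mean (bubble_space 4 (k - 9)).
          edge_ip a b (\<lambda>s. \<xi> (p s) \<bullet> t) w = 0)
     \<and> (\<forall>j \<in> {1,2}. \<forall>w \<in> bubble_space 4 (k - 9).
          edge_ip a b (\<lambda>s. dd (\<lambda>x. \<xi> x \<bullet> n j) t (p s)) (tderiv a b w) = 0)
     \<and> (\<forall>j \<in> {1,2}. \<forall>w \<in> bubble_space 3 (k - 8).
          edge_ip a b (\<lambda>s. dd (\<lambda>x. \<xi> x \<bullet> t) (n j) (p s)) w = 0)
     \<and> (\<forall>j \<in> {1,2}. \<forall>j' \<in> {1,2}. \<forall>w \<in> bubble_space 3 (k - 8).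
          edge_ip a b (\<lambda>s. dd (\<lambda>x. \<xi> x \<bullet> n j') (n j) (p s)) w = 0)
     \<and> (\<forall>w. (\<forall>i. (\<lambda>s. w s $ i) \<in> bubble_space 2 (k - 7)) \<longrightarrow>
          edge_ipv a b (\<lambda>s. dd (curl \<xi>) n1 (p s)) w = 0)
     \<and> (\<forall>w. (\<forall>i. (\<lambda>s. w s $ i) \<in> bubble_space 2 (k - 7)) \<longrightarrow>
          edge_ipv a b (\<lambda>s. let v = dd (curl \<xi>) n2 (p s) in v - (v \<bullet> n2) *\<^sub>R n2) w = 0))"

end

theory Submission
  imports Defs
begin

text \<open>Fix an edge with unit tangent t and normals n1, n2. Restricted to the edge, every component
  of \<xi>, of its gradient and of the gradient of its curl is a univariate polynomial, and since all
  derivatives of \<xi> up to order three vanish at both endpoints these restrictions are divisible by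
  ((1 - s) s)^r with r = 4, 3, 2 respectively. They therefore lie in the very bubble spaces against
  which the edge functionals test, and testing such a restriction against itself forces it to
  vanish. The mean and (1.a) kill \<xi>\<cdot>t, (1.b) kills the tangential derivative, hence the value, of
  \<xi>\<cdot>n_j, and (1.c), (1.d) kill the normal derivatives of \<xi>; tangential derivatives vanish because
  the restrictions do. For the gradient of curl \<xi>, (1.e) and (1.f) control everything except
  n2\<cdot>\<partial>(curl \<xi>)/\<partial>n2, and that entry is recovered from div curl \<xi> = 0.\<close>

section \<open>Directional derivatives\<close>

lemma has_derivative_dd: "f differentiable (at x) \<Longrightarrow> (f has_derivative (\<lambda>v. dd f v x)) (at x)"
  unfolding dd_def by (simp add: frechet_derivative_works)

lemma dd_eqI: "(f has_derivative f') (at x) \<Longrightarrow> dd f v x = f' v"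
  unfolding dd_def by (simp add: frechet_derivative_at[symmetric])

lemma linear_dd: "f differentiable (at x) \<Longrightarrow> linear (\<lambda>v. dd f v x)"
  using has_derivative_dd has_derivative_linear by blast

lemma dd_const: "dd (\<lambda>y. c) v = (\<lambda>x. 0)"
  by (rule ext, rule dd_eqI, rule has_derivative_const)

lemma dd_add:
  "f differentiable (at x) \<Longrightarrow> g differentiable (at x) \<Longrightarrow>
   dd (\<lambda>y. f y + g y) v x = dd f v x + dd g v x"
  by (rule dd_eqI) (intro has_derivative_add has_derivative_dd)

lemma dd_mult:
  fixes f g :: "real^3 \<Rightarrow> real"
  shows "f differentiable (at x) \<Longrightarrow> g differentiable (at x) \<Longrightarrow>
   dd (\<lambda>y. f y * g y) v x = f x * dd g v x + dd f v x * g x"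
  by (rule dd_eqI) (intro has_derivative_mult has_derivative_dd)

lemma dd_linear_image:
  "f differentiable (at x) \<Longrightarrow> bounded_linear L \<Longrightarrow> dd (\<lambda>y. L (f y)) v x = L (dd f v x)"
  by (rule dd_eqI) (rule bounded_linear.has_derivative[OF _ has_derivative_dd])

lemma linear_eq_sum_axis:
  fixes l :: "real^'n \<Rightarrow> real"
  assumes "linear l"
  shows "l w = (\<Sum>j\<in>UNIV. l (axis j 1) * w $ j)"
proof -
  have "l w = l (\<Sum>j\<in>UNIV. w $ j *\<^sub>R axis j 1)"
    using basis_expansion[of w] by (simp add: scalar_mult_eq_scaleR)
  then show ?thesis by (simp add: linear_sum[OF assms] linear_scale[OF assms] mult.commute)
qed

lemmas linear_inner_left = bounded_linear.linear[OF bounded_linear_inner_left]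

section \<open>Polynomials of bounded total degree\<close>

inductive polyfun :: "nat \<Rightarrow> (real^3 \<Rightarrow> real) \<Rightarrow> bool" where
  const: "polyfun m (\<lambda>x. c)"
| coord: "polyfun (Suc m) (\<lambda>x. x $ i)"
| add: "polyfun m f \<Longrightarrow> polyfun m g \<Longrightarrow> polyfun m (\<lambda>x. f x + g x)"
| mult: "polyfun m f \<Longrightarrow> polyfun n g \<Longrightarrow> polyfun (m + n) (\<lambda>x. f x * g x)"
| mono: "polyfun m f \<Longrightarrow> m \<le> n \<Longrightarrow> polyfun n f"

lemma polyfun_cmult: "polyfun m f \<Longrightarrow> polyfun m (\<lambda>x. c * f x)"
  using polyfun.mult[OF polyfun.const[of 0 c]] by simp

lemma polyfun_diff: "polyfun m f \<Longrightarrow> polyfun m g \<Longrightarrow> polyfun m (\<lambda>x. f x - g x)"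
  using polyfun.add[OF _ polyfun_cmult, of m f g "-1"] by simp

lemma polyfun_sum:
  "finite S \<Longrightarrow> (\<And>i. i \<in> S \<Longrightarrow> polyfun m (f i)) \<Longrightarrow> polyfun m (\<lambda>x. \<Sum>i\<in>S. f i x)"
  by (induction S rule: finite_induct) (auto intro: polyfun.const polyfun.add)

lemma polyfun_0_imp_const: "polyfun m f \<Longrightarrow> m = 0 \<Longrightarrow> \<exists>c. f = (\<lambda>x. c)"
  by (induction rule: polyfun.induct) force+

lemma polyfun_coord_power: "polyfun a (\<lambda>x. (x $ i) ^ a)"
proof (induction a)
  case 0 then show ?case using polyfun.const[of 0 1] by simp
next
  case (Suc a) then show ?case using polyfun.mult[OF polyfun.coord[of 0 i] Suc] by simp
qed

lemma poly3_imp_polyfun: "poly3 m f \<Longrightarrow> polyfun m f"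
proof -
  assume "poly3 m f"
  then obtain c where f: "f = (\<lambda>x. \<Sum>a\<le>m. \<Sum>b\<le>m - a. \<Sum>d\<le>m - a - b.
      c a b d * (x$1)^a * (x$2)^b * (x$3)^d)"
    unfolding poly3_def by blast
  have "polyfun m (\<lambda>x. c a b d * (x$1)^a * (x$2)^b * (x$3)^d)" if "a + b + d \<le> m" for a b d
    using polyfun.mult[OF polyfun.mult[OF polyfun_cmult[OF polyfun_coord_power]
          polyfun_coord_power] polyfun_coord_power] that
    by (rule polyfun.mono)
  then show ?thesis unfolding f by (intro polyfun_sum) auto
qed

lemma polyfun_real_polynomial_function: "polyfun m f \<Longrightarrow> real_polynomial_function f"
  by (induction rule: polyfun.induct) auto

lemma polyfun_differentiable: "polyfun m f \<Longrightarrow> f differentiable (at x)"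
  by (intro differentiable_at_real_polynomial_function polyfun_real_polynomial_function)

lemma polyfun_dd_add:
  "polyfun m f \<Longrightarrow> polyfun n g \<Longrightarrow> dd (\<lambda>y. f y + g y) v = (\<lambda>y. dd f v y + dd g v y)"
  by (rule ext, rule dd_add) (auto intro: polyfun_differentiable)

lemma polyfun_dd_mult:
  "polyfun m f \<Longrightarrow> polyfun n g \<Longrightarrow> dd (\<lambda>y. f y * g y) v = (\<lambda>y. f y * dd g v y + dd f v y * g y)"
  by (rule ext, rule dd_mult) (auto intro: polyfun_differentiable)

lemma polyfun_dd_cmult: "polyfun m f \<Longrightarrow> dd (\<lambda>y. c * f y) v = (\<lambda>y. c * dd f v y)"
  using polyfun_dd_mult[OF polyfun.const] by (simp add: dd_const)

lemma polyfun_dd_diff: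
  "polyfun m f \<Longrightarrow> polyfun n g \<Longrightarrow> dd (\<lambda>y. f y - g y) v = (\<lambda>y. dd f v y - dd g v y)"
  using polyfun_dd_add[OF _ polyfun_cmult, of m f n g "-1"] polyfun_dd_cmult[of n g "-1"] by simp

lemma dd_coord: "dd (\<lambda>x. x $ i) v = (\<lambda>x. v $ i)"
  by (rule ext, rule dd_eqI, rule bounded_linear_imp_has_derivative, rule bounded_linear_vec_nth)

lemma polyfun_dd: "polyfun m f \<Longrightarrow> polyfun (m - 1) (dd f v)"
proof (induction rule: polyfun.induct)
  case (const m c) then show ?case by (simp add: dd_const polyfun.const)
next
  case (coord m i) then show ?case by (simp add: dd_coord polyfun.const)
next
  case (add m f g) then show ?case by (simp add: polyfun_dd_add polyfun.add)
next
  case (mult m f n g)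
  consider "m = 0" | "n = 0" | "m \<noteq> 0" "n \<noteq> 0" by blast
  then show ?case
  proof cases
    case 1
    with mult.hyps obtain c where "f = (\<lambda>x. c)" using polyfun_0_imp_const by blast
    then show ?thesis using 1 polyfun_cmult[OF mult.IH(2)] polyfun_dd_cmult[OF mult.hyps(2)] by simp
  next
    case 2
    with mult.hyps obtain c where "g = (\<lambda>x. c)" using polyfun_0_imp_const by blast
    then show ?thesis using 2 polyfun_cmult[OF mult.IH(1)] polyfun_dd_cmult[OF mult.hyps(1)]
      by (simp add: mult.commute)
  next
    case 3
    have "polyfun (m + (n - 1)) (\<lambda>x. f x * dd g v x)" "polyfun ((m - 1) + n) (\<lambda>x. dd f v x * g x)"
      using mult by (auto intro: polyfun.mult)
    moreover have "m + (n - 1) = m + n - 1" "(m - 1) + n = m + n - 1" using 3 by auto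
    ultimately show ?thesis by (simp add: polyfun_dd_mult[OF mult.hyps] polyfun.add)
  qed
next
  case (mono m f n) then show ?case by (auto intro: polyfun.mono)
qed

lemma polyfun_pd: "polyfun m f \<Longrightarrow> polyfun (m - 1) (pd i f)"
  unfolding pd_def by (rule polyfun_dd)

lemma dd_eq_sum_pd: "polyfun m f \<Longrightarrow> dd f v = (\<lambda>y. \<Sum>i\<in>UNIV. v $ i * pd i f y)"
  unfolding pd_def
  by (rule ext, subst linear_eq_sum_axis[OF linear_dd[OF polyfun_differentiable]])
    (auto intro: sum.cong mult.commute)

lemma pd_commute: "polyfun m f \<Longrightarrow> pd i (pd j f) = pd j (pd i f)"
proof (induction rule: polyfun.induct)
  case (add m f g)
  then show ?case
    unfolding pd_def by (simp add: polyfun_dd_add polyfun_dd_add[OF polyfun_dd polyfun_dd])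
next
  case (mult m f n g)
  note f1 = polyfun_dd[OF mult.hyps(1)] and g1 = polyfun_dd[OF mult.hyps(2)]
  have "pd i (pd j (\<lambda>x. f x * g x)) = (\<lambda>x. f x * pd i (pd j g) x + pd i f x * pd j g x
         + (pd j f x * pd i g x + pd i (pd j f) x * g x))" for i j
    unfolding pd_def polyfun_dd_mult[OF mult.hyps]
    by (simp add: polyfun_dd_add[OF polyfun.mult[OF mult.hyps(1) g1] polyfun.mult[OF f1 mult.hyps(2)]]
        polyfun_dd_mult[OF mult.hyps(1) g1] polyfun_dd_mult[OF f1 mult.hyps(2)])
  then show ?case using mult.IH by (simp add: algebra_simps)
qed (simp_all add: pd_def dd_const dd_coord)

section \<open>Vanishing to a given order and restriction to lines\<close>

fun vanishes_to_order :: "nat \<Rightarrow> (real^3 \<Rightarrow> real) \<Rightarrow> real^3 \<Rightarrow> bool" where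
  "vanishes_to_order 0 g x \<longleftrightarrow> True"
| "vanishes_to_order (Suc r) g x \<longleftrightarrow> g x = 0 \<and> (\<forall>p. vanishes_to_order r (pd p g) x)"

lemma vanishes_to_order_add:
  "polyfun m f \<Longrightarrow> polyfun n g \<Longrightarrow> vanishes_to_order r f x \<Longrightarrow> vanishes_to_order r g x \<Longrightarrow>
   vanishes_to_order r (\<lambda>y. f y + g y) x"
proof (induction r arbitrary: m n f g)
  case (Suc r)
  have "pd p (\<lambda>y. f y + g y) = (\<lambda>y. pd p f y + pd p g y)" for p
    unfolding pd_def using Suc.prems(1,2) by (rule polyfun_dd_add)
  then show ?case
    using Suc.prems Suc.IH[OF polyfun_pd[OF Suc.prems(1)] polyfun_pd[OF Suc.prems(2)]] by simp
qed simp

lemma vanishes_to_order_cmult: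
  "polyfun m f \<Longrightarrow> vanishes_to_order r f x \<Longrightarrow> vanishes_to_order r (\<lambda>y. c * f y) x"
proof (induction r arbitrary: m f)
  case (Suc r)
  have "pd p (\<lambda>y. c * f y) = (\<lambda>y. c * pd p f y)" for p
    unfolding pd_def using Suc.prems(1) by (rule polyfun_dd_cmult)
  then show ?case using Suc.prems Suc.IH[OF polyfun_pd[OF Suc.prems(1)]] by simp
qed simp

lemma vanishes_to_order_diff:
  assumes "polyfun m f" "polyfun n g" "vanishes_to_order r f x" "vanishes_to_order r g x"
  shows "vanishes_to_order r (\<lambda>y. f y - g y) x"
  using vanishes_to_order_add[OF assms(1) polyfun_cmult[OF assms(2), where c="-1"] assms(3)
      vanishes_to_order_cmult[OF assms(2,4), where c="-1"]]
  by simp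

lemma vanishes_to_order_sum:
  "finite S \<Longrightarrow> (\<And>i. i \<in> S \<Longrightarrow> polyfun m (f i)) \<Longrightarrow> (\<And>i. i \<in> S \<Longrightarrow> vanishes_to_order r (f i) x) \<Longrightarrow>
   vanishes_to_order r (\<lambda>y. \<Sum>i\<in>S. c i * f i y) x"
proof (induction S rule: finite_induct)
  case empty
  have "vanishes_to_order r (\<lambda>y. 0) x" for r by (induction r) (simp_all add: pd_def dd_const)
  then show ?case by simp
next
  case (insert a S)
  have fa: "polyfun m (f a)" and va: "vanishes_to_order r (f a) x" using insert.prems by auto
  have "polyfun m (\<lambda>y. \<Sum>i\<in>S. c i * f i y)" using insert by (intro polyfun_sum polyfun_cmult) auto
  moreover have "vanishes_to_order r (\<lambda>y. \<Sum>i\<in>S. c i * f i y) x" using insert by auto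
  ultimately show ?case
    using vanishes_to_order_add[OF polyfun_cmult[OF fa] _ vanishes_to_order_cmult[OF fa va]] insert(1,2)
    by simp
qed

lemma vanishes_to_order_dd:
  assumes "polyfun m g" "vanishes_to_order (Suc r) g x"
  shows "vanishes_to_order r (dd g v) x"
  unfolding dd_eq_sum_pd[OF assms(1)]
  using assms by (intro vanishes_to_order_sum[OF _ polyfun_pd[OF assms(1)]]) auto

lemma polyfun_restrict_line:
  "polyfun m g \<Longrightarrow> \<exists>P. degree P \<le> m \<and> (\<forall>s. g (a + s *\<^sub>R v) = poly P s)"
proof (induction rule: polyfun.induct)
  case (const m c) then show ?case by (intro exI[of _ "[:c:]"]) auto
next
  case (coord m i) then show ?case by (intro exI[of _ "[:a $ i, v $ i:]"]) auto
next
  case (add m f g)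
  then obtain P Q where "degree P \<le> m" "\<forall>s. f (a + s *\<^sub>R v) = poly P s"
     "degree Q \<le> m" "\<forall>s. g (a + s *\<^sub>R v) = poly Q s" by blast
  then show ?case by (intro exI[of _ "P + Q"]) (auto intro: order.trans[OF degree_add_le_max])
next
  case (mult m f n g)
  then obtain P Q where "degree P \<le> m" "\<forall>s. f (a + s *\<^sub>R v) = poly P s"
     "degree Q \<le> n" "\<forall>s. g (a + s *\<^sub>R v) = poly Q s" by blast
  then show ?case by (intro exI[of _ "P * Q"]) (auto intro: order.trans[OF degree_mult_le])
next
  case (mono m f n) then show ?case by (meson order.trans)
qed

lemma dd_restrict_line:
  assumes g: "polyfun m g" and P: "\<forall>s. g (a + s *\<^sub>R v) = poly P s"
  shows "dd g v (a + s *\<^sub>R v) = poly (pderiv P) s"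
proof -
  have "((\<lambda>s. g (a + s *\<^sub>R v)) has_derivative (\<lambda>h. dd g (h *\<^sub>R v) (a + s *\<^sub>R v))) (at s)"
    by (rule has_derivative_compose[OF _ has_derivative_dd[OF polyfun_differentiable[OF g]]])
      (auto intro!: derivative_eq_intros)
  moreover have "(\<lambda>h. dd g (h *\<^sub>R v) (a + s *\<^sub>R v)) = (*) (dd g v (a + s *\<^sub>R v))"
    using linear_scale[OF linear_dd[OF polyfun_differentiable[OF g]]] by (auto simp: mult.commute)
  moreover have "(\<lambda>s. g (a + s *\<^sub>R v)) = poly P" using P by auto
  ultimately have "(poly P has_field_derivative dd g v (a + s *\<^sub>R v)) (at s)"
    unfolding has_field_derivative_def by simp
  then show ?thesis using poly_DERIV DERIV_unique by blast
qed

lemma vanishes_to_order_imp_power_dvd: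
  assumes "polyfun m g" "\<forall>s. g (a + s *\<^sub>R v) = poly P s" "vanishes_to_order r g (a + c *\<^sub>R v)"
  shows "[:-c, 1:] ^ r dvd P"
  using assms
proof (induction r arbitrary: m g P)
  case (Suc r)
  have "\<forall>s. dd g v (a + s *\<^sub>R v) = poly (pderiv P) s" using dd_restrict_line[OF Suc.prems(1,2)] by blast
  moreover have "vanishes_to_order r (dd g v) (a + c *\<^sub>R v)"
    using vanishes_to_order_dd Suc.prems(1,3) by blast
  ultimately have dvd_pderiv: "[:-c, 1:] ^ r dvd pderiv P"
    using Suc.IH[OF polyfun_dd[OF Suc.prems(1)]] by blast
  have P0: "poly P c = 0" using Suc.prems by auto
  show ?case
  proof (cases "P = 0")
    case False
    have "pderiv P \<noteq> 0"
    proof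
      assume "pderiv P = 0"
      then obtain d where "P = [:d:]" by (metis degree_eq_zeroE pderiv_eq_0_iff)
      then show False using False P0 by simp
    qed
    then have "Suc r \<le> order c P"
      using dvd_pderiv order_pderiv[OF False P0] by (simp add: order_divides)
    then show ?thesis using order_divides by blast
  qed simp
qed simp

lemma poly_bubble_factorization:
  fixes P :: "real poly"
  assumes "[:0, 1:] ^ r dvd P" "[:-1, 1:] ^ r dvd P" "degree P \<le> m"
  shows "\<exists>Q. degree Q \<le> m - 2 * r \<and> (\<forall>s. poly P s = ((1 - s) * s) ^ r * poly Q s)"
proof (cases "P = 0")
  case True then show ?thesis by (intro exI[of _ 0]) auto
next
  case False
  obtain R where R: "P = [:0, 1:] ^ r * R" using assms(1) unfolding dvd_def by blast
  have "R \<noteq> 0" using False R by auto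
  have "order 1 ([:0, 1:] ^ r :: real poly) = 0" using order_root[of "[:0, 1:] ^ r :: real poly" 1] by simp
  then have "order 1 R = order 1 P" using R \<open>R \<noteq> 0\<close> by (simp add: order_mult)
  then have "[:-1, 1:] ^ r dvd R" using assms(2) False \<open>R \<noteq> 0\<close> by (simp add: order_divides)
  then obtain Q where Q: "R = [:-1, 1:] ^ r * Q" unfolding dvd_def by blast
  have "Q \<noteq> 0" using Q \<open>R \<noteq> 0\<close> by auto
  then have "degree P = r + (r + degree Q)" unfolding R Q by (simp add: degree_mult_eq degree_linear_power)
  then have "degree (smult ((-1) ^ r) Q) \<le> m - 2 * r" using assms(3) by simp
  moreover have "poly P s = ((1 - s) * s) ^ r * poly (smult ((-1) ^ r) Q) s" for s
  proof -
    have "poly P s = s ^ r * (s - 1) ^ r * poly Q s" unfolding R Q by simp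
    also have "(s - 1) ^ r = (-1) ^ r * (1 - s) ^ r" by (metis minus_diff_eq power_minus)
    finally show ?thesis by (simp add: power_mult_distrib mult_ac)
  qed
  ultimately show ?thesis by blast
qed

section \<open>Edge moments\<close>

lemma poly_eq_0_if_vanishes_on_unit_interval:
  assumes "\<forall>s\<in>{0..1::real}. poly P s = 0"
  shows "P = 0"
proof (rule ccontr)
  assume "P \<noteq> 0"
  then have "finite {s. poly P s = 0}" by (rule poly_roots_finite)
  then have "finite {0..1::real}" by (rule finite_subset[rotated]) (use assms in auto)
  then show False using infinite_Icc[of "0::real" 1] by simp
qed

lemma poly_eq_0_if_integral_sum_squares_eq_0:
  fixes P :: "'i \<Rightarrow> real poly"
  assumes "finite I" "integral {0..1} (\<lambda>s. \<Sum>i\<in>I. poly (P i) s * poly (P i) s) = 0" "i \<in> I"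
  shows "P i = 0"
proof -
  have "continuous_on {0..1} (\<lambda>s. \<Sum>i\<in>I. poly (P i) s * poly (P i) s)"
    by (intro continuous_intros)
  then have "\<forall>s\<in>{0..1}. (\<Sum>i\<in>I. poly (P i) s * poly (P i) s) = 0"
    using integral_eq_0_iff[of 0 1] assms(2) by (simp add: sum_nonneg)
  then have "\<forall>s\<in>{0..1}. poly (P i) s = 0" using assms(1,3) by (simp add: sum_nonneg_eq_0_iff)
  then show ?thesis by (rule poly_eq_0_if_vanishes_on_unit_interval)
qed

lemma polyfun_edge_restriction:
  "polyfun m g \<Longrightarrow> \<exists>P. degree P \<le> m \<and> (\<lambda>s. g (edge_pt a b s)) = poly P"
  using polyfun_restrict_line[of m g a "b - a"] by (auto simp: edge_pt_def)

lemma edge_restriction_in_bubble_space: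
  assumes g: "polyfun m g" and "vanishes_to_order r g a" "vanishes_to_order r g b" "m - 2 * r \<le> d"
  shows "(\<lambda>s. g (edge_pt a b s)) \<in> bubble_space r d"
proof -
  obtain P where P: "degree P \<le> m" "\<forall>s. g (a + s *\<^sub>R (b - a)) = poly P s"
    using polyfun_restrict_line[OF g] by blast
  have "[:0, 1:] ^ r dvd P" using vanishes_to_order_imp_power_dvd[OF g P(2), of r 0] assms(2) by simp
  moreover have "[:-1, 1:] ^ r dvd P" using vanishes_to_order_imp_power_dvd[OF g P(2), of r 1] assms(3) by simp
  ultimately obtain Q where "degree Q \<le> m - 2 * r" "\<forall>s. poly P s = ((1 - s) * s) ^ r * poly Q s"
    using poly_bubble_factorization[OF _ _ P(1)] by blast
  then show ?thesis unfolding bubble_space_def edge_pt_def using P(2) assms(4) by force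
qed

lemma edge_restriction_eq_0_of_self_ip:
  assumes "a \<noteq> b" "polyfun m g"
    and "edge_ip a b (\<lambda>s. g (edge_pt a b s)) (\<lambda>s. g (edge_pt a b s)) = 0"
  shows "g (edge_pt a b s) = 0"
proof -
  obtain P where P: "(\<lambda>s. g (edge_pt a b s)) = poly P" using polyfun_edge_restriction[OF assms(2)] by blast
  have "integral {0..1} (\<lambda>s. \<Sum>i\<in>{()}. poly P s * poly P s) = 0"
    using assms(1,3) unfolding edge_ip_def P by simp
  then have "P = 0" using poly_eq_0_if_integral_sum_squares_eq_0[of "{()}" "\<lambda>_. P"] by simp
  then show ?thesis using fun_cong[OF P, of s] by simp
qed

lemma edge_zero_of_bubble_moments:
  assumes "a \<noteq> b" "polyfun m g" "vanishes_to_order r g a" "vanishes_to_order r g b" "m - 2 * r \<le> d"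
    and "\<forall>w\<in>bubble_space r d. edge_ip a b (\<lambda>s. g (edge_pt a b s)) w = 0"
  shows "g (edge_pt a b s) = 0"
  using edge_restriction_eq_0_of_self_ip[OF assms(1,2)] assms(6)
    edge_restriction_in_bubble_space[OF assms(2-5)] by blast

lemma edge_zero_of_mean_and_bubble_moments:
  assumes "a \<noteq> b" "polyfun m g" "vanishes_to_order r g a" "vanishes_to_order r g b" "m - 2 * r \<le> d"
    and "edge_ip a b (\<lambda>s. g (edge_pt a b s)) (\<lambda>s. 1) = 0"
    and "\<forall>w\<in>zero_mean (bubble_space r d). edge_ip a b (\<lambda>s. g (edge_pt a b s)) w = 0"
  shows "g (edge_pt a b s) = 0"
proof -
  have "integral {0..1} (\<lambda>s. g (edge_pt a b s)) = 0" using assms(1,6) unfolding edge_ip_def by simp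
  then have "(\<lambda>s. g (edge_pt a b s)) \<in> zero_mean (bubble_space r d)"
    unfolding zero_mean_def using edge_restriction_in_bubble_space[OF assms(2-5)] by simp
  then show ?thesis using edge_restriction_eq_0_of_self_ip[OF assms(1,2)] assms(7) by blast
qed

lemma dd_utangent: "polyfun m g \<Longrightarrow> dd g (utangent a b) x = dd g (b - a) x / norm (b - a)"
  unfolding utangent_def
  by (simp add: linear_scale[OF linear_dd[OF polyfun_differentiable]] divide_inverse mult.commute)

lemma dd_utangent_restrict_edge:
  assumes "polyfun m g" "(\<lambda>s. g (edge_pt a b s)) = poly P"
  shows "dd g (utangent a b) (edge_pt a b s) = poly (pderiv P) s / norm (b - a)"
  using dd_restrict_line[OF assms(1), of a "b - a" P s] assms(2)
  by (simp add: dd_utangent[OF assms(1)] edge_pt_def fun_eq_iff)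

lemma edge_zero_of_tangential_moments:
  assumes "a \<noteq> b" "polyfun m g" "g a = 0" "(\<lambda>s. g (edge_pt a b s)) \<in> W"
    and "\<forall>w\<in>W. edge_ip a b (\<lambda>s. dd g (utangent a b) (edge_pt a b s)) (tderiv a b w) = 0"
  shows "g (edge_pt a b s) = 0"
proof -
  obtain P where P: "(\<lambda>s. g (edge_pt a b s)) = poly P" using polyfun_edge_restriction[OF assms(2)] by blast
  have "edge_ip a b (\<lambda>s. dd g (utangent a b) (edge_pt a b s)) (tderiv a b (poly P)) = 0"
    using assms(4,5) unfolding P by blast
  moreover have "tderiv a b (poly P) = (\<lambda>s. poly (pderiv P) s / norm (b - a))"
    unfolding tderiv_def by (simp add: DERIV_imp_deriv[OF poly_DERIV])
  ultimately have "edge_ip a b (\<lambda>s. poly (pderiv P) s / norm (b - a)) (\<lambda>s. poly (pderiv P) s / norm (b - a)) = 0"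
    using dd_utangent_restrict_edge[OF assms(2) P] by simp
  then have "integral {0..1} (\<lambda>s. \<Sum>i\<in>{()}. poly (smult (1 / norm (b - a)) (pderiv P)) s
      * poly (smult (1 / norm (b - a)) (pderiv P)) s) = 0"
    using assms(1) unfolding edge_ip_def by simp
  then have "pderiv P = 0"
    using assms(1) poly_eq_0_if_integral_sum_squares_eq_0[of "{()}"] by fastforce
  then obtain c where "P = [:c:]" by (metis degree_eq_zeroE pderiv_eq_0_iff)
  moreover have "poly P 0 = 0" using fun_cong[OF P, of 0] assms(3) by (simp add: edge_pt_def)
  ultimately show ?thesis using fun_cong[OF P, of s] by simp
qed

lemma dd_utangent_eq_0_on_edge:
  assumes "polyfun m g" "\<forall>s. g (edge_pt a b s) = 0"
  shows "dd g (utangent a b) (edge_pt a b s) = 0"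
proof -
  have "(\<lambda>s. g (edge_pt a b s)) = poly 0" using assms(2) by auto
  then show ?thesis using dd_utangent_restrict_edge[OF assms(1)] by simp
qed

section \<open>Polynomial vector fields and the curl\<close>

definition vpolyfun :: "nat \<Rightarrow> (real^3 \<Rightarrow> real^3) \<Rightarrow> bool" where
  "vpolyfun m F \<longleftrightarrow> (\<forall>i. polyfun m (\<lambda>y. F y $ i))"

lemma vpoly3_imp_vpolyfun: "vpoly3 m F \<Longrightarrow> vpolyfun m F"
  unfolding vpoly3_def vpolyfun_def using poly3_imp_polyfun by blast

lemma vpolyfun_differentiable: "vpolyfun m F \<Longrightarrow> F differentiable (at x)"
  unfolding differentiable_componentwise_within[of F x UNIV]
  by (auto simp: Basis_vec_def inner_axis vpolyfun_def intro: polyfun_differentiable)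

lemma vpolyfun_dd_linear:
  fixes L :: "real^3 \<Rightarrow> 'b::real_normed_vector"
  shows "linear L \<Longrightarrow> vpolyfun m F \<Longrightarrow> dd (\<lambda>y. L (F y)) v x = L (dd F v x)"
  by (rule dd_linear_image) (simp_all add: vpolyfun_differentiable linear_conv_bounded_linear)

lemma dd_component: "vpolyfun m F \<Longrightarrow> dd F v x $ i = dd (\<lambda>y. F y $ i) v x"
  by (rule dd_linear_image[OF vpolyfun_differentiable bounded_linear_vec_nth, symmetric])

lemma dd_component_fun: "vpolyfun m F \<Longrightarrow> (\<lambda>y. dd F v y $ i) = dd (\<lambda>y. F y $ i) v"
  by (auto simp: dd_component)

lemma pd_component: "vpolyfun m F \<Longrightarrow> pd p (\<lambda>y. F y $ i) = (\<lambda>y. pd p F y $ i)"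
  unfolding pd_def by (simp add: dd_component_fun)

lemma vpolyfun_dd:
  assumes "vpolyfun m F"
  shows "vpolyfun (m - 1) (dd F v)"
  using assms polyfun_dd unfolding vpolyfun_def dd_component_fun[OF assms] by blast

lemma vpolyfun_pd: "vpolyfun m F \<Longrightarrow> vpolyfun (m - 1) (pd p F)"
  unfolding pd_def by (rule vpolyfun_dd)

lemma polyfun_linear_functional: "linear l \<Longrightarrow> vpolyfun m F \<Longrightarrow> polyfun m (\<lambda>y. l (F y))"
  by (subst linear_eq_sum_axis) (auto simp: vpolyfun_def intro!: polyfun_sum polyfun_cmult)

lemma vanishes_to_order_linear_functional:
  "linear l \<Longrightarrow> vpolyfun m F \<Longrightarrow> (\<And>j. vanishes_to_order r (\<lambda>y. F y $ j) x) \<Longrightarrow>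
   vanishes_to_order r (\<lambda>y. l (F y)) x"
  by (subst linear_eq_sum_axis) (auto simp: vpolyfun_def intro!: vanishes_to_order_sum)

lemma vanishes_to_order_4_of_derivatives:
  assumes F: "vpolyfun m F"
    and "\<And>p q r. F x = 0 \<and> pd p F x = 0 \<and> pd p (pd q F) x = 0 \<and> pd p (pd q (pd r F)) x = 0"
  shows "vanishes_to_order 4 (\<lambda>y. F y $ l) x"
  using assms(2)
  by (simp add: numeral_eq_Suc pd_component[OF F] pd_component[OF vpolyfun_pd[OF F]]
      pd_component[OF vpolyfun_pd[OF vpolyfun_pd[OF F]]])

lemma curl_component:
  "curl F y $ 1 = pd 2 (\<lambda>y. F y $ 3) y - pd 3 (\<lambda>y. F y $ 2) y"
  "curl F y $ 2 = pd 3 (\<lambda>y. F y $ 1) y - pd 1 (\<lambda>y. F y $ 3) y"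
  "curl F y $ 3 = pd 1 (\<lambda>y. F y $ 2) y - pd 2 (\<lambda>y. F y $ 1) y"
  by (simp_all add: curl_def)

lemma polyfun_pd_component: "vpolyfun m F \<Longrightarrow> polyfun (m - 1) (pd p (\<lambda>y. F y $ i))"
  unfolding vpolyfun_def by (blast intro: polyfun_pd)

lemma vpolyfun_curl:
  assumes "vpolyfun m F"
  shows "vpolyfun (m - 1) (curl F)"
  unfolding vpolyfun_def forall_3 curl_component
  by (intro conjI polyfun_diff polyfun_pd_component[OF assms])

lemma vanishes_to_order_curl_component:
  assumes F: "vpolyfun m F" and "\<And>l. vanishes_to_order (Suc r) (\<lambda>y. F y $ l) x"
  shows "vanishes_to_order r (\<lambda>y. curl F y $ i) x"
proof -
  have "vanishes_to_order r (pd p (\<lambda>y. F y $ l)) x" for p l using assms(2) by simp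
  then have "vanishes_to_order r (\<lambda>y. pd p (\<lambda>y. F y $ l) y - pd q (\<lambda>y. F y $ l') y) x" for p q l l'
    by (intro vanishes_to_order_diff[OF polyfun_pd_component[OF F] polyfun_pd_component[OF F]])
  then show ?thesis using exhaust_3[of i] by (auto simp only: curl_component)
qed

lemma curl_eq_0_if_pd_eq_0: "vpolyfun m F \<Longrightarrow> (\<And>p. pd p F x = 0) \<Longrightarrow> curl F x = 0"
  by (simp add: vec_eq_iff forall_3 curl_component pd_component)

lemma div_curl_eq_0:
  assumes F: "vpolyfun m F"
  shows "(\<Sum>i\<in>UNIV. pd i (\<lambda>y. curl F y $ i) x) = 0"
proof -
  have "pd r (\<lambda>y. pd p (\<lambda>y. F y $ i) y - pd q (\<lambda>y. F y $ j) y)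
      = (\<lambda>y. pd r (pd p (\<lambda>y. F y $ i)) y - pd r (pd q (\<lambda>y. F y $ j)) y)" for r p q i j
    unfolding pd_def by (rule polyfun_dd_diff[OF polyfun_pd_component[OF F, unfolded pd_def]
          polyfun_pd_component[OF F, unfolded pd_def]])
  moreover have "pd p (pd q (\<lambda>y. F y $ i)) = pd q (pd p (\<lambda>y. F y $ i))" for p q i
    using F unfolding vpolyfun_def by (blast intro: pd_commute)
  ultimately show ?thesis unfolding UNIV_3 by (simp add: curl_component)
qed

lemma edge_vector_zero_of_bubble_moments:
  assumes "a \<noteq> b" "vpolyfun m G"
    and "\<And>i. vanishes_to_order r (\<lambda>y. G y $ i) a" "\<And>i. vanishes_to_order r (\<lambda>y. G y $ i) b"
    and "m - 2 * r \<le> d"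
    and "\<forall>w. (\<forall>i. (\<lambda>s. w s $ i) \<in> bubble_space r d) \<longrightarrow> edge_ipv a b (\<lambda>s. G (edge_pt a b s)) w = 0"
  shows "G (edge_pt a b s) = 0"
proof -
  have G: "polyfun m (\<lambda>y. G y $ i)" for i using assms(2) by (simp add: vpolyfun_def)
  have "\<forall>i. \<exists>Q. (\<lambda>s. G (edge_pt a b s) $ i) = poly Q"
    using polyfun_edge_restriction[OF G] by blast
  then obtain P where P: "\<And>i. (\<lambda>s. G (edge_pt a b s) $ i) = poly (P i)" by metis
  have "(\<lambda>s. G (edge_pt a b s) $ i) \<in> bubble_space r d" for i
    by (rule edge_restriction_in_bubble_space[OF G assms(3-5)])
  then have "edge_ipv a b (\<lambda>s. G (edge_pt a b s)) (\<lambda>s. G (edge_pt a b s)) = 0"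
    by (intro assms(6)[rule_format] allI)
  moreover have "G (edge_pt a b s) \<bullet> G (edge_pt a b s) = (\<Sum>i\<in>UNIV. poly (P i) s * poly (P i) s)" for s
    unfolding inner_vec_def using P by (simp add: fun_eq_iff)
  ultimately have "integral {0..1} (\<lambda>s. \<Sum>i\<in>UNIV. poly (P i) s * poly (P i) s) = 0"
    using assms(1) unfolding edge_ipv_def by simp
  then have "P i = 0" for i by (rule poly_eq_0_if_integral_sum_squares_eq_0[OF finite]) simp
  then show ?thesis using P by (simp add: vec_eq_iff fun_eq_iff)
qed

section \<open>Orthonormal frames\<close>

locale orthonormal_frame =
  fixes t n1 n2 :: "real^3"
  assumes tt: "t \<bullet> t = 1" and n1n1: "n1 \<bullet> n1 = 1" and n2n2: "n2 \<bullet> n2 = 1"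
    and tn1: "t \<bullet> n1 = 0" and tn2: "t \<bullet> n2 = 0" and n1n2: "n1 \<bullet> n2 = 0"
begin

lemma eq_0:
  assumes "w \<bullet> t = 0" "w \<bullet> n1 = 0" "w \<bullet> n2 = 0"
  shows "w = 0"
proof -
  define B where "B = {t, n1, n2}"
  have distinct: "t \<noteq> n1" "t \<noteq> n2" "n1 \<noteq> n2" using tt n1n1 tn1 tn2 n1n2 by auto
  have "pairwise orthogonal B" unfolding B_def pairwise_def orthogonal_def
    using tn1 tn2 n1n2 by (auto simp: inner_commute)
  moreover have "0 \<notin> B" unfolding B_def using tt n1n1 n2n2 by auto
  ultimately have "independent B" by (rule pairwise_orthogonal_independent)
  moreover have "card B = 3" unfolding B_def using distinct by simp
  ultimately have "span B = UNIV"
    using card_ge_dim_independent[of B UNIV] by (simp add: subset_antisym)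
  then obtain u where u: "w = (\<Sum>v\<in>B. u v *\<^sub>R v)"
    using span_finite[of B] unfolding B_def by auto
  have "w \<bullet> w = (\<Sum>v\<in>B. u v * (w \<bullet> v))"
    by (subst (2) u) (simp add: inner_sum_right)
  also have "\<dots> = 0" unfolding B_def using assms distinct by simp
  finally show ?thesis by simp
qed

lemma expansion: "w = (w \<bullet> t) *\<^sub>R t + (w \<bullet> n1) *\<^sub>R n1 + (w \<bullet> n2) *\<^sub>R n2"
proof -
  have "w - ((w \<bullet> t) *\<^sub>R t + (w \<bullet> n1) *\<^sub>R n1 + (w \<bullet> n2) *\<^sub>R n2) = 0"
    by (rule eq_0) (use tt n1n1 n2n2 tn1 tn2 n1n2 in
        \<open>simp_all add: inner_diff_left inner_add_left inner_diff_right inner_add_right inner_commute\<close>)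
  then show ?thesis by simp
qed

lemma linear_eq_0:
  assumes "linear L" "L t = 0" "L n1 = 0" "L n2 = 0"
  shows "L v = 0"
proof -
  have "L v = L ((v \<bullet> t) *\<^sub>R t + (v \<bullet> n1) *\<^sub>R n1 + (v \<bullet> n2) *\<^sub>R n2)" using expansion[of v] by simp
  also have "\<dots> = 0" using assms by (simp add: linear_add linear_scale)
  finally show ?thesis .
qed

lemma trace_eq:
  assumes "linear A"
  shows "(\<Sum>i\<in>UNIV. A (axis i 1) $ i) = A t \<bullet> t + A n1 \<bullet> n1 + A n2 \<bullet> n2"
proof -
  have "A (axis i 1) = t $ i *\<^sub>R A t + n1 $ i *\<^sub>R A n1 + n2 $ i *\<^sub>R A n2" for i
  proof -
    have "A (axis i 1) = A ((axis i 1 \<bullet> t) *\<^sub>R t + (axis i 1 \<bullet> n1) *\<^sub>R n1 + (axis i 1 \<bullet> n2) *\<^sub>R n2)"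
      using expansion[of "axis i 1"] by simp
    then show ?thesis using assms by (simp add: linear_add linear_scale inner_axis')
  qed
  then show ?thesis by (simp add: sum.distrib inner_vec_def mult.commute)
qed

end

section \<open>Vanishing on one edge\<close>

locale edge_with_vanishing_dofs = orthonormal_frame "utangent a b" n1 n2
  for a b n1 n2 :: "real^3" +
  fixes k :: nat and \<xi> :: "real^3 \<Rightarrow> real^3"
  assumes distinct: "a \<noteq> b"
    and poly: "vpolyfun (k - 1) \<xi>"
    and flat_a: "\<And>l. vanishes_to_order 4 (\<lambda>y. \<xi> y $ l) a"
    and flat_b: "\<And>l. vanishes_to_order 4 (\<lambda>y. \<xi> y $ l) b"
    and dofs: "edge_dofs_vanish k a b n1 n2 \<xi>"
begin

lemma mean_dof: "edge_ip a b (\<lambda>s. \<xi> (edge_pt a b s) \<bullet> utangent a b) (\<lambda>s. 1) = 0"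
  and tangential_dof:
    "\<forall>w\<in>zero_mean (bubble_space 4 (k - 9)). edge_ip a b (\<lambda>s. \<xi> (edge_pt a b s) \<bullet> utangent a b) w = 0"
  and normal_dof: "n \<in> {n1, n2} \<Longrightarrow> \<forall>w\<in>bubble_space 4 (k - 9).
    edge_ip a b (\<lambda>s. dd (\<lambda>x. \<xi> x \<bullet> n) (utangent a b) (edge_pt a b s)) (tderiv a b w) = 0"
  and normal_derivative_dof: "u \<in> {utangent a b, n1, n2} \<Longrightarrow> n \<in> {n1, n2} \<Longrightarrow>
    \<forall>w\<in>bubble_space 3 (k - 8). edge_ip a b (\<lambda>s. dd (\<lambda>x. \<xi> x \<bullet> u) n (edge_pt a b s)) w = 0"
  and curl_n1_dof: "\<forall>w. (\<forall>i. (\<lambda>s. w s $ i) \<in> bubble_space 2 (k - 7)) \<longrightarrow>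
    edge_ipv a b (\<lambda>s. dd (curl \<xi>) n1 (edge_pt a b s)) w = 0"
  and curl_n2_dof: "\<forall>w. (\<forall>i. (\<lambda>s. w s $ i) \<in> bubble_space 2 (k - 7)) \<longrightarrow>
    edge_ipv a b (\<lambda>s. dd (curl \<xi>) n2 (edge_pt a b s)
      - (dd (curl \<xi>) n2 (edge_pt a b s) \<bullet> n2) *\<^sub>R n2) w = 0"
  using dofs unfolding edge_dofs_vanish_def Let_def by auto

lemma polyfun_inner: "polyfun (k - 1) (\<lambda>y. \<xi> y \<bullet> u)"
  by (rule polyfun_linear_functional[OF linear_inner_left poly])

lemma vanishes_to_order_inner:
  "vanishes_to_order 4 (\<lambda>y. \<xi> y \<bullet> u) a" "vanishes_to_order 4 (\<lambda>y. \<xi> y \<bullet> u) b"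
  by (rule vanishes_to_order_linear_functional[OF linear_inner_left poly], simp add: flat_a flat_b)+

lemma xi_eq_0_on_edge: "\<xi> (edge_pt a b s) = 0"
proof (rule eq_0)
  show "\<xi> (edge_pt a b s) \<bullet> utangent a b = 0"
    using edge_zero_of_mean_and_bubble_moments[OF distinct polyfun_inner vanishes_to_order_inner _
        mean_dof tangential_dof] by simp
  have "\<xi> (edge_pt a b s) \<bullet> n = 0" if "n \<in> {n1, n2}" for n
  proof (rule edge_zero_of_tangential_moments[OF distinct polyfun_inner, of _ "bubble_space 4 (k - 9)"])
    show "\<xi> a \<bullet> n = 0" using vanishes_to_order_inner(1) by (simp add: numeral_eq_Suc)
    show "(\<lambda>s. \<xi> (edge_pt a b s) \<bullet> n) \<in> bubble_space 4 (k - 9)"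
      by (rule edge_restriction_in_bubble_space[OF polyfun_inner vanishes_to_order_inner]) simp
  qed (rule normal_dof[OF that])
  then show "\<xi> (edge_pt a b s) \<bullet> n1 = 0" "\<xi> (edge_pt a b s) \<bullet> n2 = 0" by simp_all
qed

lemma dd_xi_eq_0_on_edge: "dd \<xi> v (edge_pt a b s) = 0"
proof (rule linear_eq_0[OF linear_dd[OF vpolyfun_differentiable[OF poly]]])
  have normal: "dd (\<lambda>y. \<xi> y \<bullet> u) n (edge_pt a b s) = 0"
    if "u \<in> {utangent a b, n1, n2}" "n \<in> {n1, n2}" for u n
  proof (rule edge_zero_of_bubble_moments[OF distinct polyfun_dd[OF polyfun_inner]])
    show "vanishes_to_order 3 (dd (\<lambda>y. \<xi> y \<bullet> u) n) a" "vanishes_to_order 3 (dd (\<lambda>y. \<xi> y \<bullet> u) n) b"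
      by (rule vanishes_to_order_dd[OF polyfun_inner], use vanishes_to_order_inner in simp)+
  qed (use normal_derivative_dof[OF that] in simp_all)
  have tangential: "dd (\<lambda>y. \<xi> y \<bullet> u) (utangent a b) (edge_pt a b s) = 0" for u
    by (rule dd_utangent_eq_0_on_edge[OF polyfun_inner]) (simp add: xi_eq_0_on_edge)
  have "dd \<xi> v (edge_pt a b s) = 0" if "v \<in> {utangent a b, n1, n2}" for v
    using that normal tangential
    by (intro eq_0) (auto simp: vpolyfun_dd_linear[OF linear_inner_left poly, symmetric])
  then show "dd \<xi> (utangent a b) (edge_pt a b s) = 0" "dd \<xi> n1 (edge_pt a b s) = 0"
    "dd \<xi> n2 (edge_pt a b s) = 0" by simp_all
qed

lemma vpolyfun_curl_xi: "vpolyfun (k - 1 - 1) (curl \<xi>)"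
  by (rule vpolyfun_curl[OF poly])

lemma polyfun_curl_component: "polyfun (k - 1 - 1) (\<lambda>y. curl \<xi> y $ i)"
  using vpolyfun_curl_xi unfolding vpolyfun_def by blast

lemma vanishes_to_order_dd_curl:
  "vanishes_to_order 2 (\<lambda>y. dd (curl \<xi>) v y $ i) a" "vanishes_to_order 2 (\<lambda>y. dd (curl \<xi>) v y $ i) b"
proof -
  have flat: "vanishes_to_order 3 (\<lambda>y. curl \<xi> y $ i) x" if "x \<in> {a, b}" for x
    by (rule vanishes_to_order_curl_component[OF poly]) (use that flat_a flat_b in auto)
  show "vanishes_to_order 2 (\<lambda>y. dd (curl \<xi>) v y $ i) a" "vanishes_to_order 2 (\<lambda>y. dd (curl \<xi>) v y $ i) b"
    unfolding dd_component_fun[OF vpolyfun_curl_xi]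
    by (rule vanishes_to_order_dd[OF polyfun_curl_component], use flat in simp)+
qed

lemma curl_eq_0_on_edge: "curl \<xi> (edge_pt a b s) = 0"
  by (rule curl_eq_0_if_pd_eq_0[OF poly]) (simp add: pd_def dd_xi_eq_0_on_edge)

lemma dd_curl_utangent_eq_0_on_edge: "dd (curl \<xi>) (utangent a b) (edge_pt a b s) = 0"
proof -
  have "dd (\<lambda>y. curl \<xi> y $ i) (utangent a b) (edge_pt a b s) = 0" for i
    by (rule dd_utangent_eq_0_on_edge[OF polyfun_curl_component]) (simp add: curl_eq_0_on_edge)
  then show ?thesis by (simp add: vec_eq_iff dd_component[OF vpolyfun_curl_xi])
qed

lemma dd_curl_n1_eq_0_on_edge: "dd (curl \<xi>) n1 (edge_pt a b s) = 0"
  by (rule edge_vector_zero_of_bubble_moments[OF distinct vpolyfun_dd[OF vpolyfun_curl_xi]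
        vanishes_to_order_dd_curl _ curl_n1_dof]) simp

lemma dd_curl_n2_tangential_eq_0_on_edge:
  "dd (curl \<xi>) n2 (edge_pt a b s) - (dd (curl \<xi>) n2 (edge_pt a b s) \<bullet> n2) *\<^sub>R n2 = 0"
proof -
  define G where "G y = dd (curl \<xi>) n2 y - (dd (curl \<xi>) n2 y \<bullet> n2) *\<^sub>R n2" for y
  have lin: "linear (\<lambda>w. (w - (w \<bullet> n2) *\<^sub>R n2) $ i)" for i
    by (rule linearI) (simp_all add: algebra_simps)
  note dd_curl = vpolyfun_dd[OF vpolyfun_curl_xi, of n2]
  have "vpolyfun (k - 1 - 1 - 1) G"
    unfolding vpolyfun_def G_def using polyfun_linear_functional[OF lin dd_curl] by blast
  moreover have "vanishes_to_order 2 (\<lambda>y. G y $ i) x" if "x \<in> {a, b}" for x i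
    unfolding G_def
    by (rule vanishes_to_order_linear_functional[OF lin dd_curl]) (use that vanishes_to_order_dd_curl in auto)
  ultimately show ?thesis
    using edge_vector_zero_of_bubble_moments[OF distinct, of _ G 2 "k - 7"] curl_n2_dof
    unfolding G_def by simp
qed

text \<open>The n2 n2 entry is the one the degrees of freedom do not control; it is recovered from the
  vanishing divergence of the curl, i.e. from the trace of its gradient.\<close>
lemma dd_curl_eq_0_on_edge: "dd (curl \<xi>) v (edge_pt a b s) = 0"
proof -
  note lin = linear_dd[OF vpolyfun_differentiable[OF vpolyfun_curl_xi]]
  have "(\<Sum>i\<in>UNIV. dd (curl \<xi>) (axis i 1) (edge_pt a b s) $ i) = 0"
    using div_curl_eq_0[OF poly] by (simp add: dd_component[OF vpolyfun_curl_xi] pd_def)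
  then have normal: "dd (curl \<xi>) n2 (edge_pt a b s) \<bullet> n2 = 0"
    using trace_eq[OF lin] dd_curl_utangent_eq_0_on_edge dd_curl_n1_eq_0_on_edge by simp
  have "dd (curl \<xi>) n2 (edge_pt a b s) = 0"
    using dd_curl_n2_tangential_eq_0_on_edge[of s] by (simp only: normal scale_zero_left diff_zero)
  then show ?thesis
    by (rule linear_eq_0[OF lin dd_curl_utangent_eq_0_on_edge dd_curl_n1_eq_0_on_edge])
qed

end

lemma orthonormal_frame_utangent:
  assumes "a \<noteq> b" "norm n1 = 1" "norm n2 = 1" "n1 \<bullet> n2 = 0" "n1 \<bullet> (b - a) = 0" "n2 \<bullet> (b - a) = 0"
  shows "orthonormal_frame (utangent a b) n1 n2"
proof
  have "norm (utangent a b) = 1" using assms(1) by (simp add: utangent_def)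
  then show "utangent a b \<bullet> utangent a b = 1" by (simp add: dot_square_norm)
  show "n1 \<bullet> n1 = 1" "n2 \<bullet> n2 = 1" using assms(2,3) by (simp_all add: dot_square_norm)
  show "utangent a b \<bullet> n1 = 0" "utangent a b \<bullet> n2 = 0"
    using assms(5,6) by (simp_all add: utangent_def inner_commute)
qed (fact assms(4))

theorem lemmaB1:
  fixes k :: nat and V :: "nat \<Rightarrow> real^3" and \<xi> :: "real^3 \<Rightarrow> real^3"
    and N1 N2 :: "nat \<Rightarrow> nat \<Rightarrow> real^3"
  assumes k: "k \<ge> 9"
    and tet: "inj_on V {0..3}" "\<not> affine_dependent (V ` {0..3})"
    and normals: "\<And>i j. i < j \<Longrightarrow> j \<le> 3 \<Longrightarrow>
        norm (N1 i j) = 1 \<and> norm (N2 i j) = 1 \<and> N1 i j \<bullet> N2 i j = 0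
        \<and> N1 i j \<bullet> (V j - V i) = 0 \<and> N2 i j \<bullet> (V j - V i) = 0"
    and poly: "vpoly3 (k - 1) \<xi>"
    and vert: "\<And>m p q r. m \<le> 3 \<Longrightarrow>
        \<xi> (V m) = 0 \<and> pd p \<xi> (V m) = 0 \<and> pd p (pd q \<xi>) (V m) = 0
        \<and> pd p (pd q (pd r \<xi>)) (V m) = 0"
    and edges: "\<And>i j. i < j \<Longrightarrow> j \<le> 3 \<Longrightarrow>
        edge_dofs_vanish k (V i) (V j) (N1 i j) (N2 i j) \<xi>"
  shows "\<forall>i j. i < j \<and> j \<le> 3 \<longrightarrow> (\<forall>x \<in> closed_segment (V i) (V j).
           \<xi> x = 0 \<and> (\<forall>p. pd p \<xi> x = 0) \<and> (\<forall>p. pd p (curl \<xi>) x = 0))"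
proof (intro allI impI ballI)
  fix i j :: nat and x
  assume ij: "i < j \<and> j \<le> 3" and x: "x \<in> closed_segment (V i) (V j)"
  have distinct: "V i \<noteq> V j" using inj_onD[OF tet(1), of i j] ij by auto
  have vpoly: "vpolyfun (k - 1) \<xi>" by (rule vpoly3_imp_vpolyfun[OF poly])
  have flat: "vanishes_to_order 4 (\<lambda>y. \<xi> y $ l) (V m)" if "m \<le> 3" for l m
    by (rule vanishes_to_order_4_of_derivatives[OF vpoly vert[OF that]])
  interpret edge_with_vanishing_dofs "V i" "V j" "N1 i j" "N2 i j" k \<xi>
  proof (intro_locales)
    show "orthonormal_frame (utangent (V i) (V j)) (N1 i j) (N2 i j)"
      using orthonormal_frame_utangent[OF distinct] normals[of i j] ij by blast
    show "edge_with_vanishing_dofs_axioms (V i) (V j) (N1 i j) (N2 i j) k \<xi>"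
      using distinct vpoly flat edges[of i j] ij by unfold_locales auto
  qed
  obtain s where "x = edge_pt (V i) (V j) s"
    using x unfolding in_segment edge_pt_def by (auto simp: algebra_simps)
  then show "\<xi> x = 0 \<and> (\<forall>p. pd p \<xi> x = 0) \<and> (\<forall>p. pd p (curl \<xi>) x = 0)"
    by (simp add: pd_def xi_eq_0_on_edge dd_xi_eq_0_on_edge dd_curl_eq_0_on_edge)
qed

end
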